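(* Let $F:\mathbb{R}^p\to\mathbb{R}^p$ be single-valued, let $\kappa_1,\kappa_2\ge0$, $\beta\in(0,1]$, $\eta>0$, and let $\{(x^k,y^k)\}$ be generated by: start from $x^0\in\mathrm{dom}\,F$, set $x^{-1}=y^{-1}:=x^0$, and for $k\ge0$ $$y^k:=x^k-\tfrac{\eta}{\beta}u^k,\qquad x^{k+1}:=x^k-\eta Fy^k,$$ where $u^k\in\mathbb{R}^p$ satisfies $\|Fx^k-u^k\|^2\le\kappa_1\|Fx^k-Fy^{k-1}\|^2+\kappa_2\|Fx^k-Fx^{k-1}\|^2$. Then for any $\gamma>0$, any $\hat x\in\mathrm{dom}\,F$ and any $k\ge0$, $$\begin{aligned}\|x^{k+1}-\hat x\|^2\le{}&\|x^k-\hat x\|^2-\beta\|y^k-x^k\|^2+\tfrac{\eta^2}{\gamma}\|Fy^k-u^k\|^2-2\eta\langle Fy^k,y^k-\hat x\rangle\\&-(\beta-\gamma)\|x^{k+1}-y^k\|^2-(1-\beta)\|x^{k+1}-x^k\|^2.\end{aligned}$$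
   Context: $\|\cdot\|$, $\langle\cdot,\cdot\rangle$ are the Euclidean norm and inner product. *)

theory Defs
  imports "HOL-Analysis.Analysis"
begin

end

theory Submission
  imports Defs
begin

text \<open>With \<open>b = x (k+1) - x k = -\<eta> F (y k)\<close>, \<open>c = y k - x k = -(\<eta>/\<beta>) u k\<close> and
  \<open>w = x k - xhat\<close>, the right-hand side minus the left-hand side of the estimate is exactly
  \<open>\<parallel>(\<gamma> - 1) b - (\<gamma> - \<beta>) c\<parallel>\<^sup>2 / \<gamma> \<ge> 0\<close>. So the estimate holds for every choice of \<open>u k\<close>.\<close>

lemma norm_step_square_identity:
  fixes w b c :: "'a::real_inner" and \<beta> \<gamma> :: real
  assumes "\<gamma> \<noteq> 0"
  shows "(norm (w + b))\<^sup>2 + (norm ((\<gamma> - 1) *\<^sub>R b - (\<gamma> - \<beta>) *\<^sub>R c))\<^sup>2 / \<gamma>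
    = (norm w)\<^sup>2 - \<beta> * (norm c)\<^sup>2 + (norm (\<beta> *\<^sub>R c - b))\<^sup>2 / \<gamma> + 2 * (b \<bullet> (w + c))
      - (\<beta> - \<gamma>) * (norm (b - c))\<^sup>2 - (1 - \<beta>) * (norm b)\<^sup>2"
  using assms
  unfolding power2_norm_eq_inner
  by (simp add: inner_add inner_diff inner_commute field_simps power2_eq_square)

lemma extragradient_step_estimate:
  fixes x y x' z g u :: "'a::real_inner" and \<beta> \<eta> \<gamma> :: real
  assumes "\<beta> \<noteq> 0" "\<gamma> > 0"
    and y: "y = x - (\<eta> / \<beta>) *\<^sub>R u" and x': "x' = x - \<eta> *\<^sub>R g"
  shows "(norm (x' - z))\<^sup>2
      \<le> (norm (x - z))\<^sup>2 - \<beta> * (norm (y - x))\<^sup>2 + (\<eta>\<^sup>2 / \<gamma>) * (norm (g - u))\<^sup>2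
         - 2 * \<eta> * (g \<bullet> (y - z)) - (\<beta> - \<gamma>) * (norm (x' - y))\<^sup>2 - (1 - \<beta>) * (norm (x' - x))\<^sup>2"
proof -
  define b where "b = x' - x"
  define c where "c = y - x"
  have \<eta>g: "\<eta> *\<^sub>R g = - b" and \<eta>u: "\<eta> *\<^sub>R u = - \<beta> *\<^sub>R c"
    using \<open>\<beta> \<noteq> 0\<close> by (simp_all add: b_def c_def x' y)
  have "\<eta>\<^sup>2 * (norm (g - u))\<^sup>2 = (norm (\<eta> *\<^sub>R g - \<eta> *\<^sub>R u))\<^sup>2"
    by (simp add: power_mult_distrib flip: scaleR_diff_right)
  also have "\<dots> = (norm (\<beta> *\<^sub>R c - b))\<^sup>2"
    by (simp add: \<eta>g \<eta>u)
  finally have gu: "(\<eta>\<^sup>2 / \<gamma>) * (norm (g - u))\<^sup>2 = (norm (\<beta> *\<^sub>R c - b))\<^sup>2 / \<gamma>"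
    by simp
  have "\<eta> * (g \<bullet> (y - z)) = - (b \<bullet> ((x - z) + c))"
    using \<eta>g by (simp add: c_def flip: inner_scaleR_left)
  then have g: "2 * \<eta> * (g \<bullet> (y - z)) = - 2 * (b \<bullet> ((x - z) + c))"
    by simp
  have "(norm (x' - z))\<^sup>2
      \<le> (norm ((x - z) + b))\<^sup>2 + (norm ((\<gamma> - 1) *\<^sub>R b - (\<gamma> - \<beta>) *\<^sub>R c))\<^sup>2 / \<gamma>"
    using \<open>\<gamma> > 0\<close> by (simp add: b_def)
  also have "\<dots> = (norm (x - z))\<^sup>2 - \<beta> * (norm c)\<^sup>2 + (norm (\<beta> *\<^sub>R c - b))\<^sup>2 / \<gamma>
      + 2 * (b \<bullet> ((x - z) + c)) - (\<beta> - \<gamma>) * (norm (b - c))\<^sup>2 - (1 - \<beta>) * (norm b)\<^sup>2"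
    using \<open>\<gamma> > 0\<close> by (simp add: norm_step_square_identity)
  also have "\<dots> = (norm (x - z))\<^sup>2 - \<beta> * (norm (y - x))\<^sup>2 + (\<eta>\<^sup>2 / \<gamma>) * (norm (g - u))\<^sup>2
      - 2 * \<eta> * (g \<bullet> (y - z)) - (\<beta> - \<gamma>) * (norm (x' - y))\<^sup>2 - (1 - \<beta>) * (norm (x' - x))\<^sup>2"
    unfolding gu g by (simp add: b_def c_def)
  finally show ?thesis .
qed

theorem lemma1:
  fixes F :: "real^'p \<Rightarrow> real^'p"
    and x y u :: "nat \<Rightarrow> real^'p"
    and \<kappa>1 \<kappa>2 \<beta> \<eta> \<gamma> :: real
    and xhat :: "real^'p"
    and k :: nat
  assumes k1: "\<kappa>1 \<ge> 0" and k2: "\<kappa>2 \<ge> 0"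
    and beta: "0 < \<beta>" "\<beta> \<le> 1"
    and eta: "\<eta> > 0"
    and y_def: "\<And>k. y k = x k - (\<eta> / \<beta>) *\<^sub>R u k"
    and x_step: "\<And>k. x (Suc k) = x k - \<eta> *\<^sub>R F (y k)"
    and u_cond: "\<And>k. (norm (F (x k) - u k))\<^sup>2
        \<le> \<kappa>1 * (norm (F (x k) - F (if k = 0 then x 0 else y (k - 1))))\<^sup>2
         + \<kappa>2 * (norm (F (x k) - F (if k = 0 then x 0 else x (k - 1))))\<^sup>2"
    and gamma: "\<gamma> > 0"
  shows "(norm (x (Suc k) - xhat))\<^sup>2
      \<le> (norm (x k - xhat))\<^sup>2 - \<beta> * (norm (y k - x k))\<^sup>2
         + (\<eta>\<^sup>2 / \<gamma>) * (norm (F (y k) - u k))\<^sup>2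
         - 2 * \<eta> * (F (y k) \<bullet> (y k - xhat))
         - (\<beta> - \<gamma>) * (norm (x (Suc k) - y k))\<^sup>2
         - (1 - \<beta>) * (norm (x (Suc k) - x k))\<^sup>2"
  using extragradient_step_estimate[OF _ gamma y_def x_step] beta(1) by simp

end
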